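(* In every financial network without default cost (i.e., with $\delta=1$), for any distinct banks $v,w$, there is no positive multi-trade of incoming edges of creditor $v$ to buyer $w$; that is, there is no such multi-trade whose post-trade assets satisfy both $a'_v>a_v$ and $a'_w>a_w$.
   Context: A financial network is $\mathcal{F}=(V,E,\ell,a^x)$: $V$ is a finite set of banks, $E$ a set of directed edges, where $(u,v)\in E$ means debtor $u$ owes creditor $v$ the liability $\ell_{(u,v)}\in\mathbb{N}_{>0}$, and $a^x_b\in\mathbb{N}_{\ge 0}$ are the external assets of bank $b$. $E^+(b)$ and $E^-(b)$ denote the outgoing and incoming edges of $b$, and $L_b=\sum_{e\in E^+(b)}\ell_e$. There is a default-cost parameter $\delta\in[0,1]$. For a payment vector $p=(p_e)_{e\in E}\ge 0$, bank $b$ is solvent if $a^x_b+\sum_{e\in E^-(b)}p_e\ge L_b$, and then its total assets are $a_b=a^x_b+\sum_{e\in E^-(b)}p_e$; otherwise $b$ is in default and $a_b=\delta\,(a^x_b+\sum_{e\in E^-(b)}p_e)$. A fixed point is a vector $p$ with $p_e=\min\{a_b,L_b\}\ell_e/L_b$ for all $b$ and $e\in E^+(b)$. The fixed points form a complete lattice, and the clearing state is its supremum. Assets $a_b$ and recovery rates $r_b=\min\{a_b/L_b,1\}$ always refer to the clearing state. Multi-trade of incoming edges: for distinct banks $v$ (creditor) and $w$ (buyer), let $e_1,\dots,e_k$ be the edges of $E^-(v)\setminus\{(w,v)\}$, with $e_i=(u_i,v)$. Choose fractions $\beta_i\in[0,1]$ and haircut rates $\alpha_i\in[0,1]$, with total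 return $\rho=\sum_i\alpha_i\beta_i\ell_{e_i}\le a^x_w$. In the post-trade network $\mathcal{F}'$, the liability of $e_i$ becomes $(1-\beta_i)\ell_{e_i}$ and $\beta_i\ell_{e_i}$ is added to the liability of edge $(u_i,w)$ (which is created if absent). The external assets of $v$ become $a^x_v+\rho$, those of $w$ become $a^x_w-\rho$, and everything else is unchanged. Post-trade assets $a'_b$ are those in the clearing state of $\mathcal{F}'$, while $a_b$ are those of $\mathcal{F}$. *)

theory Defs
  imports Complex_Main
begin

text \<open>A (real-valued) financial network is given by a finite bank set V, a liability
function l (an edge (u,v) exists iff l u v > 0, debtor u, creditor v) and external
assets ax.\<close>

definition total_liab :: "'b set \<Rightarrow> ('b \<Rightarrow> 'b \<Rightarrow> real) \<Rightarrow> 'b \<Rightarrow> real" where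
  "total_liab V l b = (\<Sum>v\<in>V. l b v)"

definition gross_assets :: "'b set \<Rightarrow> ('b \<Rightarrow> 'b \<Rightarrow> real) \<Rightarrow> ('b \<Rightarrow> real)
    \<Rightarrow> ('b \<Rightarrow> 'b \<Rightarrow> real) \<Rightarrow> 'b \<Rightarrow> real" where
  "gross_assets V l ax p b = ax b + (\<Sum>u\<in>{u\<in>V. l u b > 0}. p u b)"

definition assets :: "real \<Rightarrow> 'b set \<Rightarrow> ('b \<Rightarrow> 'b \<Rightarrow> real) \<Rightarrow> ('b \<Rightarrow> real)
    \<Rightarrow> ('b \<Rightarrow> 'b \<Rightarrow> real) \<Rightarrow> 'b \<Rightarrow> real" where
  "assets \<delta> V l ax p b =
     (if gross_assets V l ax p b \<ge> total_liab V l b then gross_assets V l ax p b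
      else \<delta> * gross_assets V l ax p b)"

definition fixed_point :: "real \<Rightarrow> 'b set \<Rightarrow> ('b \<Rightarrow> 'b \<Rightarrow> real) \<Rightarrow> ('b \<Rightarrow> real)
    \<Rightarrow> ('b \<Rightarrow> 'b \<Rightarrow> real) \<Rightarrow> bool" where
  "fixed_point \<delta> V l ax p \<longleftrightarrow>
     (\<forall>u v. if u \<in> V \<and> v \<in> V \<and> l u v > 0
            then p u v = min (assets \<delta> V l ax p u) (total_liab V l u) * l u v / total_liab V l u
            else p u v = 0)"

definition clearing_state :: "real \<Rightarrow> 'b set \<Rightarrow> ('b \<Rightarrow> 'b \<Rightarrow> real) \<Rightarrow> ('b \<Rightarrow> real)
    \<Rightarrow> ('b \<Rightarrow> 'b \<Rightarrow> real)" where
  "clearing_state \<delta> V l ax = (GREATEST p. fixed_point \<delta> V l ax p)"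

definition clearing_assets :: "real \<Rightarrow> 'b set \<Rightarrow> ('b \<Rightarrow> 'b \<Rightarrow> real) \<Rightarrow> ('b \<Rightarrow> real)
    \<Rightarrow> 'b \<Rightarrow> real" where
  "clearing_assets \<delta> V l ax b = assets \<delta> V l ax (clearing_state \<delta> V l ax) b"

text \<open>Multi-trade of incoming edges of creditor v to buyer w. The traded edges are
E^-(v) minus (w,v), indexed by their debtors u; beta u, alpha u are fraction and haircut.\<close>

definition traded_debtors :: "'b set \<Rightarrow> ('b \<Rightarrow> 'b \<Rightarrow> real) \<Rightarrow> 'b \<Rightarrow> 'b \<Rightarrow> 'b set" where
  "traded_debtors V l v w = {u \<in> V. u \<noteq> w \<and> l u v > 0}"

definition trade_return :: "'b set \<Rightarrow> ('b \<Rightarrow> 'b \<Rightarrow> real) \<Rightarrow> 'b \<Rightarrow> 'b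
    \<Rightarrow> ('b \<Rightarrow> real) \<Rightarrow> ('b \<Rightarrow> real) \<Rightarrow> real" where
  "trade_return V l v w \<alpha> \<beta> = (\<Sum>u\<in>traded_debtors V l v w. \<alpha> u * \<beta> u * l u v)"

definition valid_multi_trade :: "'b set \<Rightarrow> ('b \<Rightarrow> 'b \<Rightarrow> real) \<Rightarrow> ('b \<Rightarrow> real) \<Rightarrow> 'b \<Rightarrow> 'b
    \<Rightarrow> ('b \<Rightarrow> real) \<Rightarrow> ('b \<Rightarrow> real) \<Rightarrow> bool" where
  "valid_multi_trade V l ax v w \<alpha> \<beta> \<longleftrightarrow>
     v \<in> V \<and> w \<in> V \<and> v \<noteq> w \<and>
     (\<forall>u\<in>traded_debtors V l v w. 0 \<le> \<alpha> u \<and> \<alpha> u \<le> 1 \<and> 0 \<le> \<beta> u \<and> \<beta> u \<le> 1) \<and>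
     trade_return V l v w \<alpha> \<beta> \<le> ax w"

definition trade_liab :: "'b set \<Rightarrow> ('b \<Rightarrow> 'b \<Rightarrow> real) \<Rightarrow> 'b \<Rightarrow> 'b
    \<Rightarrow> ('b \<Rightarrow> real) \<Rightarrow> ('b \<Rightarrow> 'b \<Rightarrow> real)" where
  "trade_liab V l v w \<beta> = (\<lambda>x y.
     if x \<in> traded_debtors V l v w \<and> y = v then (1 - \<beta> x) * l x v
     else if x \<in> traded_debtors V l v w \<and> y = w then l x w + \<beta> x * l x v
     else l x y)"

definition trade_ext :: "'b set \<Rightarrow> ('b \<Rightarrow> 'b \<Rightarrow> real) \<Rightarrow> ('b \<Rightarrow> real) \<Rightarrow> 'b \<Rightarrow> 'b
    \<Rightarrow> ('b \<Rightarrow> real) \<Rightarrow> ('b \<Rightarrow> real) \<Rightarrow> ('b \<Rightarrow> real)" where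
  "trade_ext V l ax v w \<alpha> \<beta> = (\<lambda>b.
     if b = v then ax v + trade_return V l v w \<alpha> \<beta>
     else if b = w then ax w - trade_return V l v w \<alpha> \<beta>
     else ax b)"

end

theory Submission
  imports Defs
begin

text \<open>Without default costs payments are conserved. Let \<open>S\<close> be the set of banks whose assets
  strictly increase through the trade; it contains \<open>v\<close> and \<open>w\<close>, and the trade only moves
  claims and cash between these two. Summing the gains over \<open>S\<close> shows that they can only come
  from payments of banks in \<open>S\<close> to banks in \<open>S\<close>, so before the trade every bank of \<open>S\<close> is in
  default and owes money only within \<open>S\<close>. Such a closed set of defaulting banks contradicts
  maximality of the clearing state: a positive circulation along its liabilities, obtained from a
  stationary measure of the induced random walk, can be added to the clearing payments and yields
  a larger fixed point.\<close>

lemma capped_gain_share: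
  fixes a a' c L :: real
  assumes gain: "a < a'" and c: "0 \<le> c" "c \<le> L"
  shows "(min a' L - min a L) * c / L \<le> a' - a"
    and "(min a' L - min a L) * c / L = a' - a \<Longrightarrow> a < L \<and> c = L"
proof -
  have cap: "0 \<le> min a' L - min a L" "min a' L - min a L \<le> a' - a"
    using gain by (auto simp: min_def)
  show le: "(min a' L - min a L) * c / L \<le> a' - a"
  proof (cases "L = 0")
    case False
    then have "c / L \<le> 1" using c by simp
    then have "(min a' L - min a L) * (c / L) \<le> min a' L - min a L"
      using cap(1) by (rule mult_left_le)
    then show ?thesis using cap(2) by simp
  qed (use gain in simp)
  assume eq: "(min a' L - min a L) * c / L = a' - a"
  have L: "0 < L"
    using eq gain c by (cases "L = 0") auto
  have k: "0 \<le> c / L" "c / L \<le> 1" using c L by auto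
  have "(min a' L - min a L) * (c / L) \<le> min a' L - min a L"
    using k(2) cap(1) by (rule mult_left_le)
  then have full: "min a' L - min a L = a' - a" "(a' - a) * (c / L) = a' - a"
    using eq cap(2) by auto
  then have "a < L" using gain by (auto simp: min_def split: if_splits)
  moreover have "c / L = 1" using full(2) gain mult_cancel_left2[of "a' - a" "c / L"] by linarith
  then have "c = L" using L by simp
  ultimately show "a < L \<and> c = L" ..
qed

lemma capped_loss_share:
  fixes a a' c L :: real
  assumes "a' \<le> a" "0 \<le> c" "0 \<le> L"
  shows "(min a' L - min a L) * c / L \<le> 0"
proof -
  have "min a' L - min a L \<le> 0" using assms(1) by (simp add: min_def)
  then show ?thesis using assms(2,3) by (simp add: divide_nonpos_nonneg mult_nonpos_nonneg)
qed

lemma sum_eq_if_eq_off_two: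
  assumes "finite S" "v \<in> S" "w \<in> S" "v \<noteq> w"
    and "\<And>b. b \<in> S \<Longrightarrow> b \<noteq> v \<Longrightarrow> b \<noteq> w \<Longrightarrow> f b = g b"
    and "f v + f w = g v + g w"
  shows "sum f S = sum g S"
proof -
  have split: "sum h S = sum h (S - {v, w}) + (h v + h w)" for h :: "'a \<Rightarrow> 'b"
    using assms(1-4) sum.subset_diff[of "{v, w}" S h] by simp
  show ?thesis unfolding split[of f] split[of g] using assms(5,6) by simp
qed

lemma ex_pos_scale_below:
  fixes d k :: "'a \<Rightarrow> real"
  assumes "finite S" "\<forall>b\<in>S. 0 < d b" "\<forall>b\<in>S. 0 \<le> k b"
  shows "\<exists>\<epsilon>>0. \<forall>b\<in>S. \<epsilon> * k b \<le> d b"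
proof (intro exI conjI ballI)
  define \<epsilon> where "\<epsilon> = Min (insert 1 ((\<lambda>b. d b / (k b + 1)) ` S))"
  show "0 < \<epsilon>" unfolding \<epsilon>_def using assms by (auto intro!: divide_pos_pos add_nonneg_pos)
  fix b assume b: "b \<in> S"
  have "\<epsilon> \<le> d b / (k b + 1)" unfolding \<epsilon>_def using assms(1) b by simp
  then have "\<epsilon> * (k b + 1) \<le> d b" using assms(3) b by (simp add: le_divide_eq add_nonneg_pos)
  then show "\<epsilon> * k b \<le> d b" using \<open>0 < \<epsilon>\<close> by (simp add: distrib_left)
qed

text \<open>Balancing weights are exactly those for which \<open>\<lambda>x. q x * (\<Sum>y\<in>S. M x y)\<close> is a stationary
  measure of the random walk with transition probabilities proportional to \<open>M\<close>. Existence is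
  proved by censoring the walk on \<open>S - {s}\<close>.\<close>

definition balancing_weights :: "'a set \<Rightarrow> ('a \<Rightarrow> 'a \<Rightarrow> real) \<Rightarrow> ('a \<Rightarrow> real) \<Rightarrow> bool" where
  "balancing_weights S M q \<longleftrightarrow> (\<forall>x\<in>S. 0 \<le> q x) \<and> (\<exists>x\<in>S. 0 < q x) \<and>
     (\<forall>x\<in>S. (\<Sum>y\<in>S. q y * M y x) = q x * (\<Sum>y\<in>S. M x y))"

lemma balancing_weights_censor:
  fixes M :: "'a \<Rightarrow> 'a \<Rightarrow> real"
  assumes S: "finite S" "s \<in> S" and M_nonneg: "\<forall>x\<in>S. \<forall>y\<in>S. 0 \<le> M x y"
    and D: "D = (\<Sum>y\<in>S - {s}. M s y)" "0 < D"
    and q': "balancing_weights (S - {s}) (\<lambda>x y. M x y + M x s * M s y / D) q'"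
  shows "balancing_weights S M (q'(s := (\<Sum>y\<in>S - {s}. q' y * M y s) / D))"
proof -
  define S' where "S' = S - {s}"
  define qs where "qs = (\<Sum>y\<in>S'. q' y * M y s) / D"
  define q where "q = q'(s := qs)"
  have split: "(\<Sum>y\<in>S. f y) = f s + (\<Sum>y\<in>S'. f y)" for f :: "'a \<Rightarrow> real"
    unfolding S'_def using S by (simp add: sum.remove)
  have q_S': "(\<Sum>y\<in>S'. q y * f y) = (\<Sum>y\<in>S'. q' y * f y)" for f
    unfolding q_def S'_def by (intro sum.cong) auto
  have q'_props: "\<forall>x\<in>S'. 0 \<le> q' x" "\<exists>x\<in>S'. 0 < q' x"
      "\<forall>x\<in>S'. (\<Sum>y\<in>S'. q' y * (M y x + M y s * M s x / D)) = q' x * (\<Sum>y\<in>S'. M x y + M x s * M s y / D)"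
    using q' unfolding balancing_weights_def S'_def by auto
  have qs_nonneg: "0 \<le> qs"
    unfolding qs_def using q'_props(1) M_nonneg D(2) S'_def S(2)
    by (intro divide_nonneg_pos sum_nonneg mult_nonneg_nonneg) auto
  have row: "(\<Sum>y\<in>S'. M x y + M x s * M s y / D) = (\<Sum>y\<in>S. M x y)" for x
  proof -
    have "(\<Sum>y\<in>S'. M x y + M x s * M s y / D) = (\<Sum>y\<in>S'. M x y) + M x s / D * D"
      unfolding D(1) S'_def by (simp add: sum.distrib sum_distrib_left)
    then show ?thesis using D(2) split[of "M x"] by simp
  qed
  have balance: "(\<Sum>y\<in>S. q y * M y x) = q x * (\<Sum>y\<in>S. M x y)" if x: "x \<in> S" for x
  proof (cases "x = s")
    case True
    have "(\<Sum>y\<in>S. q y * M y x) = qs * M s s + qs * D"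
      unfolding split q_S' True using D(2) by (simp add: q_def qs_def)
    also have "\<dots> = q x * (\<Sum>y\<in>S. M x y)"
      unfolding split True q_def D(1) S'_def by (simp add: algebra_simps)
    finally show ?thesis .
  next
    case False
    then have "x \<in> S'" using x unfolding S'_def by simp
    have "(\<Sum>y\<in>S. q y * M y x) = (\<Sum>y\<in>S'. q' y * M y x) + qs * M s x"
      unfolding split q_S' using False by (simp add: q_def)
    also have "\<dots> = (\<Sum>y\<in>S'. q' y * (M y x + M y s * M s x / D))"
      unfolding qs_def by (simp add: algebra_simps sum.distrib sum_distrib_left sum_divide_distrib)
    also have "\<dots> = q x * (\<Sum>y\<in>S. M x y)"
      using q'_props(3) \<open>x \<in> S'\<close> row False by (simp add: q_def)
    finally show ?thesis .
  qed
  have "\<forall>x\<in>S. 0 \<le> q x" "\<exists>x\<in>S. 0 < q x"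
    using q'_props(1,2) qs_nonneg unfolding q_def S'_def by auto
  with balance show ?thesis
    unfolding balancing_weights_def q_def qs_def S'_def by blast
qed

lemma ex_balancing_weights:
  fixes M :: "'a \<Rightarrow> 'a \<Rightarrow> real"
  assumes "finite S" "S \<noteq> {}" "\<forall>x\<in>S. \<forall>y\<in>S. 0 \<le> M x y"
  shows "\<exists>q. balancing_weights S M q"
  using assms
proof (induction "card S" arbitrary: S M rule: less_induct)
  case less
  obtain s where s: "s \<in> S" using less.prems(2) by blast
  define D where "D = (\<Sum>y\<in>S - {s}. M s y)"
  have "0 \<le> D" unfolding D_def using less.prems(3) s by (auto intro: sum_nonneg)
  show ?case
  proof (cases "D = 0")
    case True
    then have "\<forall>y\<in>S - {s}. M s y = 0"
      using less.prems(1,3) s unfolding D_def by (subst (asm) sum_nonneg_eq_0_iff) auto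
    then have "balancing_weights S M (\<lambda>x. if x = s then 1 else 0)"
      using less.prems(1) s True
      by (auto simp: balancing_weights_def D_def sum.remove[OF less.prems(1) s] if_distrib
          cong: if_cong)
    then show ?thesis by blast
  next
    case False
    with \<open>0 \<le> D\<close> have "0 < D" by simp
    then have "S - {s} \<noteq> {}" unfolding D_def by (metis sum.empty less_irrefl)
    moreover have "card (S - {s}) < card S" using less.prems(1) s by (rule card_Diff1_less)
    moreover have "\<forall>x\<in>S - {s}. \<forall>y\<in>S - {s}. 0 \<le> M x y + M x s * M s y / D"
      using less.prems(3) s \<open>0 < D\<close> by simp
    ultimately obtain q' where "balancing_weights (S - {s}) (\<lambda>x y. M x y + M x s * M s y / D) q'"
      using less.hyps less.prems(1) by (meson finite_Diff)
    then show ?thesis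
      using balancing_weights_censor[OF less.prems(1) s less.prems(3) D_def \<open>0 < D\<close>] by blast
  qed
qed

definition payment_map :: "'b set \<Rightarrow> ('b \<Rightarrow> 'b \<Rightarrow> real) \<Rightarrow> ('b \<Rightarrow> real)
    \<Rightarrow> ('b \<Rightarrow> 'b \<Rightarrow> real) \<Rightarrow> ('b \<Rightarrow> 'b \<Rightarrow> real)" where
  "payment_map V l ax p = (\<lambda>u b. if u \<in> V \<and> b \<in> V \<and> 0 < l u b
      then min (gross_assets V l ax p u) (total_liab V l u) * l u b / total_liab V l u else 0)"

lemma assets_no_default_cost [simp]: "assets 1 V l ax p b = gross_assets V l ax p b"
  by (simp add: assets_def)

lemma fixed_point_iff_payment_map: "fixed_point 1 V l ax p \<longleftrightarrow> payment_map V l ax p = p"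
  unfolding fixed_point_def payment_map_def fun_eq_iff by (intro iff_allI) auto

lemma fixed_point_off_edge: "fixed_point \<delta> V l ax p \<Longrightarrow> \<not> 0 < l u b \<Longrightarrow> p u b = 0"
  unfolding fixed_point_def by (metis (full_types))

locale financial_network =
  fixes V :: "'b set" and l :: "'b \<Rightarrow> 'b \<Rightarrow> real" and ax :: "'b \<Rightarrow> real"
  assumes finite_banks: "finite V"
    and liab_nonneg: "0 \<le> l u b"
    and ext_nonneg: "0 \<le> ax b"
    and liab_banks: "0 < l u b \<Longrightarrow> u \<in> V \<and> b \<in> V"
begin

lemma liab_eq_0_iff: "l u b = 0 \<longleftrightarrow> \<not> 0 < l u b"
  using liab_nonneg[of u b] by linarith

lemma total_liab_nonneg: "0 \<le> total_liab V l u"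
  unfolding total_liab_def by (simp add: liab_nonneg sum_nonneg)

lemma liab_le_total_liab: "l u b \<le> total_liab V l u"
proof (cases "0 < l u b")
  case True
  then show ?thesis
    unfolding total_liab_def using liab_banks finite_banks liab_nonneg
    by (intro member_le_sum) auto
qed (use total_liab_nonneg in \<open>simp add: not_less order_trans\<close>)

lemma total_liab_pos: "0 < l u b \<Longrightarrow> 0 < total_liab V l u"
  using liab_le_total_liab[of u b] by linarith

lemma ex_liab_pos: "0 < total_liab V l u \<Longrightarrow> \<exists>b\<in>V. 0 < l u b"
  unfolding total_liab_def by (metis not_less sum_nonpos)

lemma gross_assets_eq_sum:
  assumes "\<And>u. \<not> 0 < l u b \<Longrightarrow> p u b = 0"
  shows "gross_assets V l ax p b = ax b + (\<Sum>u\<in>V. p u b)"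
  unfolding gross_assets_def using finite_banks assms
  by (simp add: sum.mono_neutral_left[of V "{u \<in> V. 0 < l u b}"])

lemma payment_map_mono:
  assumes "p \<le> q"
  shows "payment_map V l ax p \<le> payment_map V l ax q"
proof (intro le_funI)
  fix u b
  have "gross_assets V l ax p u \<le> gross_assets V l ax q u"
    unfolding gross_assets_def using assms by (simp add: le_fun_def sum_mono)
  then have "min (gross_assets V l ax p u) (total_liab V l u) * l u b / total_liab V l u
      \<le> min (gross_assets V l ax q u) (total_liab V l u) * l u b / total_liab V l u"
    by (intro divide_right_mono mult_right_mono min.mono) (auto simp: liab_nonneg total_liab_nonneg)
  then show "payment_map V l ax p u b \<le> payment_map V l ax q u b"
    by (simp add: payment_map_def)
qed

lemma payment_map_nonneg:
  assumes "\<forall>u b. 0 \<le> p u b"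
  shows "0 \<le> payment_map V l ax p u b"
proof -
  have "0 \<le> gross_assets V l ax p u"
    unfolding gross_assets_def using assms ext_nonneg by (simp add: sum_nonneg)
  then show ?thesis
    by (simp add: payment_map_def liab_nonneg total_liab_nonneg)
qed

lemma payment_map_le_liab: "payment_map V l ax p u b \<le> l u b"
proof (cases "0 < l u b")
  case True
  then have "min (gross_assets V l ax p u) (total_liab V l u) * l u b \<le> total_liab V l u * l u b"
    by (intro mult_right_mono) auto
  then show ?thesis
    using total_liab_pos[OF True] by (simp add: payment_map_def divide_le_eq mult.commute liab_nonneg)
qed (simp add: payment_map_def liab_nonneg)

text \<open>Knaster--Tarski on the box \<open>0 \<le> p \<le> l\<close>: the pointwise supremum of all post-fixed points
  of the monotone payment map is its greatest fixed point.\<close>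

lemma ex_greatest_fixed_point:
  "\<exists>p. fixed_point 1 V l ax p \<and> (\<forall>q. fixed_point 1 V l ax q \<longrightarrow> q \<le> p) \<and> (\<forall>u b. 0 \<le> p u b)"
proof -
  let ?F = "payment_map V l ax"
  define Q where "Q = {p. (\<forall>u b. 0 \<le> p u b \<and> p u b \<le> l u b) \<and> p \<le> ?F p}"
  define sup where "sup u b = Sup ((\<lambda>q. q u b) ` Q)" for u b
  have zero_Q: "(\<lambda>u b. 0) \<in> Q"
    unfolding Q_def by (auto simp: le_fun_def liab_nonneg payment_map_nonneg)
  have upper: "q u b \<le> sup u b" if "q \<in> Q" for q u b
    unfolding sup_def using that
    by (intro cSup_upper imageI bdd_aboveI[of _ "l u b"]) (auto simp: Q_def)
  have sup_nonneg: "0 \<le> sup u b" for u b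
    using upper[OF zero_Q] by simp
  have sup_post: "sup \<le> ?F sup"
  proof (intro le_funI)
    fix u b
    have "q u b \<le> ?F sup u b" if "q \<in> Q" for q
    proof -
      have "q u b \<le> ?F q u b" using that by (simp add: Q_def le_fun_def)
      also have "\<dots> \<le> ?F sup u b"
        using payment_map_mono upper[OF that] by (simp add: le_fun_def)
      finally show ?thesis .
    qed
    then show "sup u b \<le> ?F sup u b"
      unfolding sup_def using zero_Q by (intro cSup_least) auto
  qed
  have "?F sup \<in> Q"
    unfolding Q_def using sup_nonneg payment_map_mono[OF sup_post]
    by (auto intro: payment_map_nonneg payment_map_le_liab)
  then have "?F sup \<le> sup" by (simp add: le_fun_def upper)
  with sup_post have fixed: "fixed_point 1 V l ax sup"
    by (simp add: fixed_point_iff_payment_map order.antisym)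
  have "q \<le> sup" if "fixed_point 1 V l ax q" for q
  proof -
    have q: "?F q = q" using that by (simp add: fixed_point_iff_payment_map)
    define q0 where "q0 u b = max (q u b) 0" for u b
    have "q \<le> q0" "(\<lambda>u b. 0) \<le> q0" by (auto simp: q0_def le_fun_def)
    then have "q \<le> ?F q0" "(\<lambda>u b. 0) \<le> ?F q0"
      using payment_map_mono[of q q0] q by (auto simp: le_fun_def payment_map_nonneg q0_def)
    moreover have "q u b \<le> l u b" for u b
      using payment_map_le_liab[of q u b] q by simp
    ultimately have "q0 \<in> Q"
      unfolding Q_def q0_def by (auto simp: le_fun_def liab_nonneg)
    then show "q \<le> sup" using upper by (force simp: le_fun_def q0_def)
  qed
  with fixed sup_nonneg show ?thesis by blast
qed

lemma
  shows fixed_point_clearing_state: "fixed_point 1 V l ax (clearing_state 1 V l ax)"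
    and fixed_point_le_clearing_state:
      "fixed_point 1 V l ax q \<Longrightarrow> q \<le> clearing_state 1 V l ax"
    and clearing_state_nonneg: "0 \<le> clearing_state 1 V l ax u b"
proof -
  obtain p where p: "fixed_point 1 V l ax p" "\<forall>q. fixed_point 1 V l ax q \<longrightarrow> q \<le> p"
      "\<forall>u b. 0 \<le> p u b"
    using ex_greatest_fixed_point by blast
  then have "clearing_state 1 V l ax = p"
    unfolding clearing_state_def by (intro Greatest_equality) auto
  with p show "fixed_point 1 V l ax (clearing_state 1 V l ax)"
    "fixed_point 1 V l ax q \<Longrightarrow> q \<le> clearing_state 1 V l ax"
    "0 \<le> clearing_state 1 V l ax u b"
    by auto
qed

lemma clearing_assets_eq_sum:
  "clearing_assets 1 V l ax b = ax b + (\<Sum>u\<in>V. clearing_state 1 V l ax u b)"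
  unfolding clearing_assets_def assets_no_default_cost
  by (intro gross_assets_eq_sum fixed_point_off_edge[OF fixed_point_clearing_state])

lemma clearing_assets_nonneg: "0 \<le> clearing_assets 1 V l ax b"
  unfolding clearing_assets_eq_sum using ext_nonneg clearing_state_nonneg
  by (simp add: sum_nonneg)

lemma clearing_payment:
  "clearing_state 1 V l ax u b =
     min (clearing_assets 1 V l ax u) (total_liab V l u) * l u b / total_liab V l u"
proof (cases "0 < l u b")
  case True
  then show ?thesis
    using fixed_point_clearing_state liab_banks[OF True]
    unfolding fixed_point_def clearing_assets_def by (metis assets_no_default_cost)
next
  case False
  then show ?thesis
    using fixed_point_off_edge[OF fixed_point_clearing_state] liab_eq_0_iff by simp
qed

lemma fixed_point_add_circulation:
  assumes fixed: "fixed_point 1 V l ax p"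
    and c_nonneg: "\<forall>x\<in>V. 0 \<le> c x"
    and balanced: "\<forall>x\<in>V. (\<Sum>u\<in>V. c u * l u x) = c x * total_liab V l x"
    and room: "\<forall>x\<in>V. c x = 0 \<or> gross_assets V l ax p x + c x * total_liab V l x \<le> total_liab V l x"
  shows "fixed_point 1 V l ax (\<lambda>u b. p u b + c u * l u b)"
proof -
  let ?L = "total_liab V l" and ?G = "gross_assets V l ax p"
  let ?p' = "\<lambda>u b. p u b + c u * l u b"
  have gross: "gross_assets V l ax ?p' x = ?G x + c x * ?L x" if "x \<in> V" for x
  proof -
    have "gross_assets V l ax ?p' x = ax x + (\<Sum>u\<in>V. ?p' u x)"
      by (rule gross_assets_eq_sum) (use fixed_point_off_edge[OF fixed] liab_eq_0_iff in auto)
    also have "\<dots> = ?G x + c x * ?L x"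
      using gross_assets_eq_sum[OF fixed_point_off_edge[OF fixed]] balanced that
      by (simp add: sum.distrib)
    finally show ?thesis .
  qed
  have "payment_map V l ax ?p' x y = ?p' x y" for x y
  proof (cases "x \<in> V \<and> y \<in> V \<and> 0 < l x y")
    case True
    then have L: "0 < ?L x" using total_liab_pos by blast
    have p: "p x y = min (?G x) (?L x) * l x y / ?L x"
      using fixed True unfolding fixed_point_def by (metis assets_no_default_cost)
    consider "c x = 0" | "0 < c x" "?G x + c x * ?L x \<le> ?L x"
      using room c_nonneg True by fastforce
    then show ?thesis
    proof cases
      case 1
      then show ?thesis using True gross p by (simp add: payment_map_def)
    next
      case 2
      then have "?G x \<le> ?L x" using mult_pos_pos[OF 2(1) L] by linarith
      then show ?thesis
        using True gross p 2 L by (simp add: payment_map_def field_simps)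
    qed
  next
    case False
    then have "l x y = 0" using liab_banks liab_eq_0_iff by blast
    then show ?thesis
      using fixed_point_off_edge[OF fixed] by (simp add: payment_map_def)
  qed
  then show ?thesis by (simp add: fixed_point_iff_payment_map fun_eq_iff)
qed

lemma no_closed_defaulting_set:
  assumes S: "S \<subseteq> V"
    and default: "\<forall>u\<in>S. clearing_assets 1 V l ax u < total_liab V l u"
    and closed: "\<forall>u\<in>S. (\<Sum>b\<in>S. l u b) = total_liab V l u"
  shows "S = {}"
proof (rule ccontr)
  assume "S \<noteq> {}"
  let ?p = "clearing_state 1 V l ax" and ?A = "clearing_assets 1 V l ax" and ?L = "total_liab V l"
  have fin_S: "finite S" using S finite_banks by (rule finite_subset)
  have L_pos: "0 < ?L u" if "u \<in> S" for u
    using default that clearing_assets_nonneg[of u] by fastforce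
  have outside: "l u b = 0" if "u \<in> S" "b \<in> V - S" for u b
  proof -
    have "?L u = (\<Sum>b\<in>V - S. l u b) + (\<Sum>b\<in>S. l u b)"
      unfolding total_liab_def using sum.subset_diff[OF S finite_banks] by simp
    then have "(\<Sum>b\<in>V - S. l u b) = 0" using closed that(1) by simp
    then show ?thesis using that(2) finite_banks liab_nonneg by (simp add: sum_nonneg_eq_0_iff)
  qed
  obtain q where q: "balancing_weights S l q"
    using ex_balancing_weights[OF fin_S \<open>S \<noteq> {}\<close>] liab_nonneg by blast
  then have q_nonneg: "\<forall>x\<in>S. 0 \<le> q x"
    and q_balance: "\<forall>x\<in>S. (\<Sum>y\<in>S. q y * l y x) = q x * ?L x"
    using closed by (auto simp: balancing_weights_def)
  obtain \<epsilon> :: real where "0 < \<epsilon>" and \<epsilon>: "\<forall>b\<in>S. \<epsilon> * (q b * ?L b) \<le> ?L b - ?A b"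
    using ex_pos_scale_below[OF fin_S, of "\<lambda>b. ?L b - ?A b" "\<lambda>b. q b * ?L b"]
      default q_nonneg total_liab_nonneg by auto
  define c where "c x = (if x \<in> S then \<epsilon> * q x else 0)" for x
  have "(\<Sum>u\<in>V. c u * l u x) = c x * ?L x" if "x \<in> V" for x
  proof -
    have "(\<Sum>u\<in>V. c u * l u x) = (\<Sum>u\<in>S. c u * l u x)"
      using S finite_banks by (intro sum.mono_neutral_right) (auto simp: c_def)
    also have "\<dots> = \<epsilon> * (\<Sum>u\<in>S. q u * l u x)"
      by (auto simp: c_def sum_distrib_left mult.assoc intro!: sum.cong)
    also have "\<dots> = c x * ?L x"
      using q_balance outside that by (auto simp: c_def)
    finally show ?thesis .
  qed
  moreover have "\<forall>x\<in>V. 0 \<le> c x" using q_nonneg \<open>0 < \<epsilon>\<close> by (simp add: c_def)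
  moreover have "\<forall>x\<in>V. c x = 0 \<or> ?A x + c x * ?L x \<le> ?L x"
    using \<epsilon> by (auto simp: c_def algebra_simps)
  ultimately have "fixed_point 1 V l ax (\<lambda>u b. ?p u b + c u * l u b)"
    using fixed_point_add_circulation[OF fixed_point_clearing_state]
    unfolding clearing_assets_def by simp
  then have le: "?p u b + c u * l u b \<le> ?p u b" for u b
  proof -
    have "(\<lambda>u b. ?p u b + c u * l u b) \<le> ?p" by (rule fixed_point_le_clearing_state) fact
    then show ?thesis by (simp add: le_fun_def)
  qed
  obtain x where x: "x \<in> S" "0 < q x" using q by (auto simp: balancing_weights_def)
  then obtain y where "0 < l x y" using ex_liab_pos L_pos by blast
  then have "0 < c x * l x y" using x \<open>0 < \<epsilon>\<close> by (simp add: c_def)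
  with le[of x y] show False by simp
qed

lemma gainers_default_and_owe_only_gainers:
  assumes "financial_network V l' ax'"
    and same_total: "total_liab V l' = total_liab V l"
    and S_def: "S = {b \<in> V. clearing_assets 1 V l ax b < clearing_assets 1 V l' ax' b}"
    and same_rows: "\<And>u. (\<Sum>b\<in>S. l' u b) = (\<Sum>b\<in>S. l u b)"
    and ext_le: "(\<Sum>b\<in>S. ax' b) \<le> (\<Sum>b\<in>S. ax b)"
  shows "\<forall>u\<in>S. clearing_assets 1 V l ax u < total_liab V l u
                \<and> (\<Sum>b\<in>S. l u b) = total_liab V l u"
proof -
  interpret N': financial_network V l' ax' by fact
  let ?p = "clearing_state 1 V l ax" and ?p' = "clearing_state 1 V l' ax'"
  let ?A = "clearing_assets 1 V l ax" and ?A' = "clearing_assets 1 V l' ax'"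
  let ?L = "total_liab V l"
  define share where
    "share u = (min (?A' u) (?L u) - min (?A u) (?L u)) * (\<Sum>b\<in>S. l u b) / ?L u" for u
  have S: "S \<subseteq> V" "finite S" using S_def finite_banks by auto
  have row_bounds: "0 \<le> (\<Sum>b\<in>S. l u b)" "(\<Sum>b\<in>S. l u b) \<le> ?L u" for u
    unfolding total_liab_def using S finite_banks liab_nonneg by (auto intro: sum_nonneg sum_mono2)
  have paid_into_S: "(\<Sum>b\<in>S. ?p' u b - ?p u b) = share u" for u
    unfolding share_def N'.clearing_payment clearing_payment same_total
    by (simp add: sum_subtractf same_rows flip: sum_divide_distrib sum_distrib_left)
      (simp add: left_diff_distrib diff_divide_distrib)
  have "(\<Sum>b\<in>S. ?A' b - ?A b) = (\<Sum>b\<in>S. ax' b - ax b) + (\<Sum>u\<in>V. \<Sum>b\<in>S. ?p' u b - ?p u b)"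
    unfolding N'.clearing_assets_eq_sum clearing_assets_eq_sum
    by (simp add: sum.distrib sum_subtractf sum.swap[of _ S V])
  also have "\<dots> = (\<Sum>b\<in>S. ax' b - ax b) + (\<Sum>u\<in>V. share u)"
    by (simp only: paid_into_S)
  also have "\<dots> \<le> (\<Sum>u\<in>V. share u)"
    using ext_le by (simp add: sum_subtractf)
  also have "\<dots> = (\<Sum>u\<in>V - S. share u) + (\<Sum>u\<in>S. share u)"
    using sum.subset_diff[OF S(1) finite_banks] by simp
  also have "\<dots> \<le> (\<Sum>u\<in>S. share u)"
    using S_def row_bounds total_liab_nonneg
    by (auto simp: share_def not_less intro!: sum_nonpos capped_loss_share)
  finally have "(\<Sum>u\<in>S. (?A' u - ?A u) - share u) \<le> 0" by (simp add: sum_subtractf)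
  moreover have gap: "\<forall>u\<in>S. 0 \<le> (?A' u - ?A u) - share u"
    using S_def row_bounds by (auto simp: share_def intro: capped_gain_share(1))
  then have "0 \<le> (\<Sum>u\<in>S. (?A' u - ?A u) - share u)" by (intro sum_nonneg) blast
  ultimately have "(\<Sum>u\<in>S. (?A' u - ?A u) - share u) = 0" by linarith
  then have "\<forall>u\<in>S. share u = ?A' u - ?A u"
    using sum_nonneg_eq_0_iff[OF S(2), of "\<lambda>u. (?A' u - ?A u) - share u"] gap by simp
  then show ?thesis
    using S_def row_bounds by (auto simp: share_def dest: capped_gain_share(2))
qed

lemma no_bank_gains:
  assumes "financial_network V l' ax'"
    and "total_liab V l' = total_liab V l"
    and S_def: "S = {b \<in> V. clearing_assets 1 V l ax b < clearing_assets 1 V l' ax' b}"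
    and "\<And>u. (\<Sum>b\<in>S. l' u b) = (\<Sum>b\<in>S. l u b)"
    and "(\<Sum>b\<in>S. ax' b) \<le> (\<Sum>b\<in>S. ax b)"
  shows "S = {}"
  using gainers_default_and_owe_only_gainers[OF assms] S_def
  by (intro no_closed_defaulting_set) auto

end

lemma trade_liab_row_sum:
  assumes "finite S" "v \<in> S" "w \<in> S" "v \<noteq> w"
  shows "(\<Sum>b\<in>S. trade_liab V l v w \<beta> u b) = (\<Sum>b\<in>S. l u b)"
  by (rule sum_eq_if_eq_off_two[OF assms]) (use assms(4) in \<open>auto simp: trade_liab_def algebra_simps\<close>)

lemma trade_ext_sum:
  assumes "finite S" "v \<in> S" "w \<in> S" "v \<noteq> w"
  shows "(\<Sum>b\<in>S. trade_ext V l ax v w \<alpha> \<beta> b) = (\<Sum>b\<in>S. ax b)"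
  by (rule sum_eq_if_eq_off_two[OF assms]) (use assms(4) in \<open>auto simp: trade_ext_def\<close>)

lemma (in financial_network) financial_network_trade:
  assumes trade: "valid_multi_trade V l ax v w \<alpha> \<beta>"
  shows "financial_network V (trade_liab V l v w \<beta>) (trade_ext V l ax v w \<alpha> \<beta>)"
proof
  have vw: "v \<in> V" "w \<in> V" "v \<noteq> w"
    and fractions: "\<forall>u\<in>traded_debtors V l v w. 0 \<le> \<alpha> u \<and> 0 \<le> \<beta> u \<and> \<beta> u \<le> 1"
    and affordable: "trade_return V l v w \<alpha> \<beta> \<le> ax w"
    using trade by (auto simp: valid_multi_trade_def)
  have traded: "traded_debtors V l v w \<subseteq> V" by (auto simp: traded_debtors_def)
  show "finite V" by (rule finite_banks)
  show "0 \<le> trade_liab V l v w \<beta> u b" for u b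
    using fractions liab_nonneg by (auto simp: trade_liab_def)
  show "0 < trade_liab V l v w \<beta> u b \<Longrightarrow> u \<in> V \<and> b \<in> V" for u b
    using liab_banks traded vw by (auto simp: trade_liab_def split: if_splits)
  have "0 \<le> trade_return V l v w \<alpha> \<beta>"
    unfolding trade_return_def using fractions liab_nonneg by (auto intro!: sum_nonneg)
  then show "0 \<le> trade_ext V l ax v w \<alpha> \<beta> b" for b
    using affordable ext_nonneg by (auto simp: trade_ext_def add_nonneg_nonneg)
qed

theorem proposition1:
  fixes V :: "'b set" and l :: "'b \<Rightarrow> 'b \<Rightarrow> nat" and ax :: "'b \<Rightarrow> nat"
    and v w :: 'b and \<alpha> \<beta> :: "'b \<Rightarrow> real"
  assumes "finite V"
    and "\<And>x y. l x y > 0 \<Longrightarrow> x \<in> V \<and> y \<in> V"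
    and "valid_multi_trade V (\<lambda>x y. real (l x y)) (\<lambda>b. real (ax b)) v w \<alpha> \<beta>"
  shows "\<not> (clearing_assets 1 V (trade_liab V (\<lambda>x y. real (l x y)) v w \<beta>)
                (trade_ext V (\<lambda>x y. real (l x y)) (\<lambda>b. real (ax b)) v w \<alpha> \<beta>) v
              > clearing_assets 1 V (\<lambda>x y. real (l x y)) (\<lambda>b. real (ax b)) v
          \<and> clearing_assets 1 V (trade_liab V (\<lambda>x y. real (l x y)) v w \<beta>)
                (trade_ext V (\<lambda>x y. real (l x y)) (\<lambda>b. real (ax b)) v w \<alpha> \<beta>) w
              > clearing_assets 1 V (\<lambda>x y. real (l x y)) (\<lambda>b. real (ax b)) w)"
proof
  let ?l = "\<lambda>x y. real (l x y)" and ?ax = "\<lambda>b. real (ax b)"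
  let ?l' = "trade_liab V ?l v w \<beta>" and ?ax' = "trade_ext V ?l ?ax v w \<alpha> \<beta>"
  interpret financial_network V ?l ?ax
    using assms(1,2) by unfold_locales auto
  define S where "S = {b \<in> V. clearing_assets 1 V ?l ?ax b < clearing_assets 1 V ?l' ?ax' b}"
  have vw: "v \<in> V" "w \<in> V" "v \<noteq> w"
    using assms(3) by (auto simp: valid_multi_trade_def)
  assume "clearing_assets 1 V ?l' ?ax' v > clearing_assets 1 V ?l ?ax v
      \<and> clearing_assets 1 V ?l' ?ax' w > clearing_assets 1 V ?l ?ax w"
  then have "v \<in> S" "w \<in> S" using vw by (auto simp: S_def)
  moreover have "finite S" using assms(1) by (simp add: S_def)
  ultimately have "S = {}"
    using vw by (intro no_bank_gains[OF financial_network_trade[OF assms(3)] _ S_def])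
      (simp_all add: total_liab_def fun_eq_iff trade_liab_row_sum trade_ext_sum assms(1))
  with \<open>v \<in> S\<close> show False by simp
qed

end
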